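(* Let $S$ be an abundant semigroup and $S^0$ a quasi-ideal adequate transversal of $S$ (i.e. an adequate transversal with $S^0SS^0\subseteq S^0$). Let $R=\{x\in S:e_x=e_{\bar x}\}$ and $L=\{x\in S: f_x=f_{\bar x}\}$. Then $L$ and $R$ are subsemigroups of $S$, $L$ is left adequate, $R$ is right adequate, and $S^0$ is a quasi-ideal adequate transversal of both $L$ and $R$.
   Context: For a semigroup $S$, $\mathcal{R}^\ast=\{(a,b): \text{for all } x,y\in S^1,\ xa=ya \iff xb=yb\}$ and $\mathcal{L}^\ast$ dually. $S$ is abundant if every $\mathcal{R}^\ast$-class and $\mathcal{L}^\ast$-class contains an idempotent; adequate if abundant with commuting idempotents; left (resp. right) adequate if abundant and every $\mathcal{R}^\ast$-class (resp. $\mathcal{L}^\ast$-class) contains a unique idempotent. In an adequate semigroup $a^+,a^\ast$ are the unique idempotents $\mathcal{R}^\ast$-, resp. $\mathcal{L}^\ast$-related to $a$. A subsemigroup $U$ of abundant $S$ is a $\ast$-subsemigroup if $U$ is abundant and $\mathcal{L}^\ast_U=\mathcal{L}^\ast_S\cap(U\times U)$, $\mathcal{R}^\ast_U=\mathcal{R}^\ast_S\cap(U\times U)$. An adequate $\ast$-subsemigroup $S^0$ of abundant $S$ is an adequate transversal if for each $x\in S$ there is a unique $\bar x\in S^0$ and idempotents $e,f$ of $S$ with $x=e\bar xf$, $e\,\mathcal{L}\,\bar x^+$, $f\,\mathcal{R}\,\bar x^\ast$ ($\mathcal{L},\mathcal{R}$ Green's relations); these $e,f$ are unique and denoted $e_x,f_x$.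 A quasi-ideal adequate transversal is one with $S^0SS^0\subseteq S^0$. *)

theory Defs
  imports Main
begin

definition semigroup_on :: "'a set \<Rightarrow> ('a \<Rightarrow> 'a \<Rightarrow> 'a) \<Rightarrow> bool" where
  "semigroup_on S m \<longleftrightarrow> (\<forall>a\<in>S. \<forall>b\<in>S. m a b \<in> S)
     \<and> (\<forall>a\<in>S. \<forall>b\<in>S. \<forall>c\<in>S. m (m a b) c = m a (m b c))"

definition subsemigroup :: "'a set \<Rightarrow> 'a set \<Rightarrow> ('a \<Rightarrow> 'a \<Rightarrow> 'a) \<Rightarrow> bool" where
  "subsemigroup U S m \<longleftrightarrow> U \<subseteq> S \<and> (\<forall>a\<in>U. \<forall>b\<in>U. m a b \<in> U)"

text \<open>Elements of S^1: None is the adjoined identity, Some x stands for x in S.\<close>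

definition S1 :: "'a set \<Rightarrow> 'a option set" where
  "S1 S = insert None (Some ` S)"

fun lmult1 :: "('a \<Rightarrow> 'a \<Rightarrow> 'a) \<Rightarrow> 'a option \<Rightarrow> 'a \<Rightarrow> 'a" where
  "lmult1 m None a = a"
| "lmult1 m (Some x) a = m x a"

fun rmult1 :: "('a \<Rightarrow> 'a \<Rightarrow> 'a) \<Rightarrow> 'a \<Rightarrow> 'a option \<Rightarrow> 'a" where
  "rmult1 m a None = a"
| "rmult1 m a (Some x) = m a x"

definition idems :: "'a set \<Rightarrow> ('a \<Rightarrow> 'a \<Rightarrow> 'a) \<Rightarrow> 'a set" where
  "idems S m = {e\<in>S. m e e = e}"

definition Rstar :: "'a set \<Rightarrow> ('a \<Rightarrow> 'a \<Rightarrow> 'a) \<Rightarrow> 'a \<Rightarrow> 'a \<Rightarrow> bool" where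
  "Rstar S m a b \<longleftrightarrow> a \<in> S \<and> b \<in> S \<and>
     (\<forall>x\<in>S1 S. \<forall>y\<in>S1 S. lmult1 m x a = lmult1 m y a \<longleftrightarrow> lmult1 m x b = lmult1 m y b)"

definition Lstar :: "'a set \<Rightarrow> ('a \<Rightarrow> 'a \<Rightarrow> 'a) \<Rightarrow> 'a \<Rightarrow> 'a \<Rightarrow> bool" where
  "Lstar S m a b \<longleftrightarrow> a \<in> S \<and> b \<in> S \<and>
     (\<forall>x\<in>S1 S. \<forall>y\<in>S1 S. rmult1 m a x = rmult1 m a y \<longleftrightarrow> rmult1 m b x = rmult1 m b y)"

definition greenL :: "'a set \<Rightarrow> ('a \<Rightarrow> 'a \<Rightarrow> 'a) \<Rightarrow> 'a \<Rightarrow> 'a \<Rightarrow> bool" where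
  "greenL S m a b \<longleftrightarrow> a \<in> S \<and> b \<in> S \<and>
     (\<exists>u\<in>S1 S. a = lmult1 m u b) \<and> (\<exists>v\<in>S1 S. b = lmult1 m v a)"

definition greenR :: "'a set \<Rightarrow> ('a \<Rightarrow> 'a \<Rightarrow> 'a) \<Rightarrow> 'a \<Rightarrow> 'a \<Rightarrow> bool" where
  "greenR S m a b \<longleftrightarrow> a \<in> S \<and> b \<in> S \<and>
     (\<exists>u\<in>S1 S. a = rmult1 m b u) \<and> (\<exists>v\<in>S1 S. b = rmult1 m a v)"

definition abundant :: "'a set \<Rightarrow> ('a \<Rightarrow> 'a \<Rightarrow> 'a) \<Rightarrow> bool" where
  "abundant S m \<longleftrightarrow> semigroup_on S m \<and>
     (\<forall>a\<in>S. \<exists>e\<in>idems S m. Rstar S m a e) \<and>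
     (\<forall>a\<in>S. \<exists>e\<in>idems S m. Lstar S m a e)"

definition adequate :: "'a set \<Rightarrow> ('a \<Rightarrow> 'a \<Rightarrow> 'a) \<Rightarrow> bool" where
  "adequate S m \<longleftrightarrow> abundant S m \<and>
     (\<forall>e\<in>idems S m. \<forall>f\<in>idems S m. m e f = m f e)"

definition left_adequate :: "'a set \<Rightarrow> ('a \<Rightarrow> 'a \<Rightarrow> 'a) \<Rightarrow> bool" where
  "left_adequate S m \<longleftrightarrow> abundant S m \<and>
     (\<forall>a\<in>S. \<exists>!e. e \<in> idems S m \<and> Rstar S m a e)"

definition right_adequate :: "'a set \<Rightarrow> ('a \<Rightarrow> 'a \<Rightarrow> 'a) \<Rightarrow> bool" where
  "right_adequate S m \<longleftrightarrow> abundant S m \<and>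
     (\<forall>a\<in>S. \<exists>!e. e \<in> idems S m \<and> Lstar S m a e)"

definition aplus :: "'a set \<Rightarrow> ('a \<Rightarrow> 'a \<Rightarrow> 'a) \<Rightarrow> 'a \<Rightarrow> 'a" where
  "aplus U m a = (THE e. e \<in> idems U m \<and> Rstar U m a e)"

definition astar :: "'a set \<Rightarrow> ('a \<Rightarrow> 'a \<Rightarrow> 'a) \<Rightarrow> 'a \<Rightarrow> 'a" where
  "astar U m a = (THE e. e \<in> idems U m \<and> Lstar U m a e)"

definition star_subsemigroup :: "'a set \<Rightarrow> 'a set \<Rightarrow> ('a \<Rightarrow> 'a \<Rightarrow> 'a) \<Rightarrow> bool" where
  "star_subsemigroup U S m \<longleftrightarrow> subsemigroup U S m \<and> abundant U m \<and>
     (\<forall>a\<in>U. \<forall>b\<in>U. Lstar U m a b \<longleftrightarrow> Lstar S m a b) \<and>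
     (\<forall>a\<in>U. \<forall>b\<in>U. Rstar U m a b \<longleftrightarrow> Rstar S m a b)"

definition decomp :: "'a set \<Rightarrow> 'a set \<Rightarrow> ('a \<Rightarrow> 'a \<Rightarrow> 'a) \<Rightarrow> 'a \<Rightarrow> 'a \<Rightarrow> 'a \<Rightarrow> 'a \<Rightarrow> bool" where
  "decomp S S0 m x xb e f \<longleftrightarrow> xb \<in> S0 \<and> e \<in> idems S m \<and> f \<in> idems S m \<and>
     x = m (m e xb) f \<and> greenL S m e (aplus S0 m xb) \<and> greenR S m f (astar S0 m xb)"

definition adequate_transversal :: "'a set \<Rightarrow> 'a set \<Rightarrow> ('a \<Rightarrow> 'a \<Rightarrow> 'a) \<Rightarrow> bool" where
  "adequate_transversal S S0 m \<longleftrightarrow> abundant S m \<and> adequate S0 m \<and>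
     star_subsemigroup S0 S m \<and>
     (\<forall>x\<in>S. \<exists>!xb. xb \<in> S0 \<and> (\<exists>e f. decomp S S0 m x xb e f))"

definition quasi_ideal_adequate_transversal :: "'a set \<Rightarrow> 'a set \<Rightarrow> ('a \<Rightarrow> 'a \<Rightarrow> 'a) \<Rightarrow> bool" where
  "quasi_ideal_adequate_transversal S S0 m \<longleftrightarrow> adequate_transversal S S0 m \<and>
     (\<forall>a\<in>S0. \<forall>s\<in>S. \<forall>b\<in>S0. m (m a s) b \<in> S0)"

definition xbar :: "'a set \<Rightarrow> 'a set \<Rightarrow> ('a \<Rightarrow> 'a \<Rightarrow> 'a) \<Rightarrow> 'a \<Rightarrow> 'a" where
  "xbar S S0 m x = (THE xb. xb \<in> S0 \<and> (\<exists>e f. decomp S S0 m x xb e f))"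

definition ex :: "'a set \<Rightarrow> 'a set \<Rightarrow> ('a \<Rightarrow> 'a \<Rightarrow> 'a) \<Rightarrow> 'a \<Rightarrow> 'a" where
  "ex S S0 m x = (THE e. \<exists>f. decomp S S0 m x (xbar S S0 m x) e f)"

definition fx :: "'a set \<Rightarrow> 'a set \<Rightarrow> ('a \<Rightarrow> 'a \<Rightarrow> 'a) \<Rightarrow> 'a \<Rightarrow> 'a" where
  "fx S S0 m x = (THE f. \<exists>e. decomp S S0 m x (xbar S S0 m x) e f)"

end

theory Submission
  imports Defs
begin

text \<open>Write \<open>x = e\<^sub>x x\<^sup>\<circ> f\<^sub>x\<close> for the decomposition of \<open>x \<in> S\<close> through the transversal.
  The elements of \<open>L\<close> are those with \<open>f\<^sub>x = x\<^sup>\<circ>\<^sup>*\<close>, i.e. \<open>x = e\<^sub>x x\<^sup>\<circ>\<close>.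
  For \<open>x, y \<in> L\<close> the quasi-ideal property puts \<open>x\<^sup>\<circ> y = x\<^sup>\<circ> y y\<^sup>\<circ>\<^sup>*\<close> into \<open>S\<^sup>0\<close>, and
  left multiplication by an idempotent \<open>\<L>\<close>-related to \<open>x\<^sup>\<circ>\<^sup>+\<close> keeps elements of \<open>S\<^sup>0\<close>
  below \<open>x\<^sup>\<circ>\<^sup>+\<close> inside \<open>L\<close>; so \<open>xy = e\<^sub>x (x\<^sup>\<circ> y) \<in> L\<close>.
  The idempotent \<open>e\<^sub>x \<in> L\<close> is \<open>\<R>\<^sup>*\<close>-related to \<open>x\<close>, and it is the only one: the key point is
  that the transversal element of an idempotent of \<open>L\<close> is again idempotent, from which two
  \<open>\<R>\<close>-related idempotents \<open>g, h\<close> of \<open>L\<close> satisfy \<open>h\<^sup>\<circ> = g\<^sup>\<circ> h\<close>, \<open>g\<^sup>\<circ> = h\<^sup>\<circ> g\<close>, hence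
  \<open>g\<^sup>\<circ> = h\<^sup>\<circ>\<close> and \<open>g = h\<close>. The statements about \<open>R\<close> are those about \<open>L\<close> for the opposite
  multiplication.\<close>

lemma semigroup_on_closed: "semigroup_on U m \<Longrightarrow> a \<in> U \<Longrightarrow> b \<in> U \<Longrightarrow> m a b \<in> U"
  unfolding semigroup_on_def by blast

lemma semigroup_on_assoc:
  "semigroup_on U m \<Longrightarrow> a \<in> U \<Longrightarrow> b \<in> U \<Longrightarrow> c \<in> U \<Longrightarrow> m (m a b) c = m a (m b c)"
  unfolding semigroup_on_def by blast

lemma idemsI: "e \<in> U \<Longrightarrow> m e e = e \<Longrightarrow> e \<in> idems U m"
  unfolding idems_def by blast

lemma idemsD: "e \<in> idems U m \<Longrightarrow> e \<in> U \<and> m e e = e"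
  unfolding idems_def by blast

lemma idems_mono: "U \<subseteq> S \<Longrightarrow> idems U m \<subseteq> idems S m"
  unfolding idems_def by blast

lemma S1_mono: "U \<subseteq> S \<Longrightarrow> S1 U \<subseteq> S1 S"
  unfolding S1_def by blast

section \<open>Duality\<close>

definition dual :: "('a \<Rightarrow> 'a \<Rightarrow> 'a) \<Rightarrow> 'a \<Rightarrow> 'a \<Rightarrow> 'a" where
  "dual m = (\<lambda>a b. m b a)"

lemma dual_apply [simp]: "dual m a b = m b a"
  by (simp add: dual_def)

lemma dual_dual [simp]: "dual (dual m) = m"
  by (simp add: dual_def)

lemma lmult1_dual: "lmult1 (dual m) x a = rmult1 m a x"
  by (cases x) auto

lemma rmult1_dual: "rmult1 (dual m) a x = lmult1 m x a"
  by (cases x) auto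

lemma Rstar_dual: "Rstar U (dual m) = Lstar U m"
  by (intro ext) (simp add: Rstar_def Lstar_def lmult1_dual)

lemma Lstar_dual: "Lstar U (dual m) = Rstar U m"
  by (intro ext) (simp add: Rstar_def Lstar_def rmult1_dual)

lemma idems_dual: "idems U (dual m) = idems U m"
  by (simp add: idems_def)

lemma greenL_dual: "greenL U (dual m) = greenR U m"
  by (intro ext) (simp add: greenL_def greenR_def lmult1_dual)

lemma greenR_dual: "greenR U (dual m) = greenL U m"
  by (intro ext) (simp add: greenL_def greenR_def rmult1_dual)

lemma semigroup_on_dual: "semigroup_on U (dual m) \<longleftrightarrow> semigroup_on U m"
  unfolding semigroup_on_def by (auto simp: dual_def)

lemma abundant_dual: "abundant U (dual m) \<longleftrightarrow> abundant U m"
  unfolding abundant_def semigroup_on_dual Rstar_dual Lstar_dual idems_dual by blast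

lemma adequate_dual: "adequate U (dual m) \<longleftrightarrow> adequate U m"
  unfolding adequate_def abundant_dual idems_dual by (auto simp: idems_def)

lemma left_adequate_dual: "left_adequate U (dual m) \<longleftrightarrow> right_adequate U m"
  unfolding left_adequate_def right_adequate_def abundant_dual idems_dual Rstar_dual ..

lemma aplus_dual: "aplus U (dual m) = astar U m"
  by (intro ext) (simp add: aplus_def astar_def idems_dual Rstar_dual)

lemma astar_dual: "astar U (dual m) = aplus U m"
  by (intro ext) (simp add: aplus_def astar_def idems_dual Lstar_dual)

lemma subsemigroup_dual: "subsemigroup U S (dual m) \<longleftrightarrow> subsemigroup U S m"
  unfolding subsemigroup_def by auto

lemma star_subsemigroup_dual: "star_subsemigroup U S (dual m) \<longleftrightarrow> star_subsemigroup U S m"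
  unfolding star_subsemigroup_def subsemigroup_dual abundant_dual Rstar_dual Lstar_dual by blast

lemma decomp_dual:
  assumes "semigroup_on S m" and "S0 \<subseteq> S"
  shows "decomp S S0 (dual m) x a e f \<longleftrightarrow> decomp S S0 m x a f e"
proof -
  have "m f (m a e) = m (m f a) e" if "a \<in> S0" "e \<in> idems S m" "f \<in> idems S m"
    using that assms semigroup_on_assoc[OF assms(1), of f a e] by (auto simp: idems_def)
  then show ?thesis
    unfolding decomp_def idems_dual greenL_dual greenR_dual aplus_dual astar_dual by auto
qed

lemma xbar_dual:
  assumes "semigroup_on S m" and "S0 \<subseteq> S"
  shows "xbar S S0 (dual m) x = xbar S S0 m x"
  unfolding xbar_def decomp_dual[OF assms] by metis

lemma fx_dual:
  assumes "semigroup_on S m" and "S0 \<subseteq> S"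
  shows "fx S S0 (dual m) x = ex S S0 m x"
  unfolding ex_def fx_def xbar_dual[OF assms] decomp_dual[OF assms] ..

lemma quasi_ideal_adequate_transversal_dual:
  assumes "quasi_ideal_adequate_transversal S S0 m"
  shows "quasi_ideal_adequate_transversal S S0 (dual m)"
proof -
  have sg: "semigroup_on S m" and sub: "S0 \<subseteq> S"
    using assms unfolding quasi_ideal_adequate_transversal_def adequate_transversal_def
      abundant_def star_subsemigroup_def subsemigroup_def by auto
  have "(\<exists>e f. decomp S S0 (dual m) x a e f) \<longleftrightarrow> (\<exists>e f. decomp S S0 m x a e f)" for x a
    using decomp_dual[OF sg sub] by blast
  moreover have "m b (m s a) = m (m b s) a" if "a \<in> S0" "s \<in> S" "b \<in> S0" for a s b
    using that sub semigroup_on_assoc[OF sg, of b s a] by (metis subsetD)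
  ultimately show ?thesis
    using assms unfolding quasi_ideal_adequate_transversal_def adequate_transversal_def
      abundant_dual adequate_dual star_subsemigroup_dual by simp
qed

section \<open>The relations \<open>\<R>\<^sup>*\<close> and \<open>\<L>\<^sup>*\<close>\<close>

lemma Rstar_iff:
  "Rstar U m a b \<longleftrightarrow> a \<in> U \<and> b \<in> U \<and>
     (\<forall>x\<in>U. \<forall>y\<in>U. m x a = m y a \<longleftrightarrow> m x b = m y b) \<and> (\<forall>x\<in>U. m x a = a \<longleftrightarrow> m x b = b)"
  unfolding Rstar_def S1_def by (auto simp: eq_commute)

lemma Rstar_refl: "a \<in> U \<Longrightarrow> Rstar U m a a"
  unfolding Rstar_def by simp

lemma Rstar_sym: "Rstar U m a b \<Longrightarrow> Rstar U m b a"
  unfolding Rstar_def by simp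

lemma Rstar_trans: "Rstar U m a b \<Longrightarrow> Rstar U m b c \<Longrightarrow> Rstar U m a c"
  unfolding Rstar_def by simp

lemma Rstar_mult_fix: "Rstar U m a b \<Longrightarrow> x \<in> U \<Longrightarrow> m x a = a \<Longrightarrow> m x b = b"
  unfolding Rstar_iff by blast

lemma Rstar_idem_absorb: "Rstar U m a e \<Longrightarrow> e \<in> idems U m \<Longrightarrow> m e a = a"
  by (metis Rstar_mult_fix Rstar_sym idemsD)

lemma Rstar_restrict: "U \<subseteq> S \<Longrightarrow> a \<in> U \<Longrightarrow> b \<in> U \<Longrightarrow> Rstar S m a b \<Longrightarrow> Rstar U m a b"
  unfolding Rstar_iff by blast

lemma Rstar_left_compat:
  assumes sg: "semigroup_on U m" and c: "c \<in> U" and ab: "Rstar U m a b"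
  shows "Rstar U m (m c a) (m c b)"
proof -
  have a: "a \<in> U" and b: "b \<in> U"
    and eq: "\<And>z w. z \<in> U \<Longrightarrow> w \<in> U \<Longrightarrow> m z a = m w a \<longleftrightarrow> m z b = m w b"
    using ab unfolding Rstar_iff by auto
  note assoc = semigroup_on_assoc[OF sg] and closed = semigroup_on_closed[OF sg]
  have "m x (m c a) = m y (m c a) \<longleftrightarrow> m x (m c b) = m y (m c b)" if "x \<in> U" "y \<in> U" for x y
  proof -
    have "m x (m c a) = m y (m c a) \<longleftrightarrow> m (m x c) a = m (m y c) a"
      using that a c by (simp add: assoc)
    also have "\<dots> \<longleftrightarrow> m (m x c) b = m (m y c) b"
      using that c by (simp add: eq closed)
    also have "\<dots> \<longleftrightarrow> m x (m c b) = m y (m c b)"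
      using that b c by (simp add: assoc)
    finally show ?thesis .
  qed
  moreover have "m x (m c a) = m c a \<longleftrightarrow> m x (m c b) = m c b" if "x \<in> U" for x
  proof -
    have "m x (m c a) = m c a \<longleftrightarrow> m (m x c) a = m c a"
      using that a c by (simp add: assoc)
    also have "\<dots> \<longleftrightarrow> m (m x c) b = m c b"
      using that c by (simp add: eq closed)
    also have "\<dots> \<longleftrightarrow> m x (m c b) = m c b"
      using that b c by (simp add: assoc)
    finally show ?thesis .
  qed
  ultimately show ?thesis
    unfolding Rstar_iff using a b c closed by simp
qed

lemma greenR_imp_Rstar:
  assumes sg: "semigroup_on U m" and ab: "greenR U m a b"
  shows "Rstar U m a b"
proof -
  have transfer: "(m x c = m y c \<longrightarrow> m x d = m y d) \<and> (m x c = c \<longrightarrow> m x d = d)"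
    if "c \<in> U" "w \<in> S1 U" "d = rmult1 m c w" "x \<in> U" "y \<in> U" for c d w x y
    using that by (cases w) (auto simp: S1_def semigroup_on_assoc[OF sg, symmetric])
  obtain u v where a: "a \<in> U" "u \<in> S1 U" "a = rmult1 m b u"
    and b: "b \<in> U" "v \<in> S1 U" "b = rmult1 m a v"
    using ab unfolding greenR_def by blast
  have "(m x a = m y a \<longleftrightarrow> m x b = m y b) \<and> (m x a = a \<longleftrightarrow> m x b = b)"
    if "x \<in> U" "y \<in> U" for x y
    using transfer[OF a(1) b(2,3) that] transfer[OF b(1) a(2,3) that] by blast
  then show ?thesis
    unfolding Rstar_iff using a(1) b(1) by blast
qed

lemma greenR_idems_iff:
  assumes sg: "semigroup_on U m" and e: "e \<in> idems U m" and f: "f \<in> idems U m"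
  shows "greenR U m e f \<longleftrightarrow> m f e = e \<and> m e f = f"
proof
  assume "greenR U m e f"
  then obtain u v where u: "u \<in> S1 U" "e = rmult1 m f u" and v: "v \<in> S1 U" "f = rmult1 m e v"
    unfolding greenR_def by blast
  have "m f e = e"
    using u e f by (cases u) (auto simp: S1_def idems_def semigroup_on_assoc[OF sg, symmetric])
  moreover have "m e f = f"
    using v e f by (cases v) (auto simp: S1_def idems_def semigroup_on_assoc[OF sg, symmetric])
  ultimately show "m f e = e \<and> m e f = f" ..
next
  assume "m f e = e \<and> m e f = f"
  moreover have "Some e \<in> S1 U" "Some f \<in> S1 U" "e \<in> U" "f \<in> U"
    using e f by (auto simp: S1_def idems_def)
  ultimately show "greenR U m e f"
    unfolding greenR_def by (metis rmult1.simps(2))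
qed

lemma greenR_I:
  "a \<in> U \<Longrightarrow> b \<in> U \<Longrightarrow> u \<in> U \<Longrightarrow> v \<in> U \<Longrightarrow> a = m b u \<Longrightarrow> b = m a v \<Longrightarrow> greenR U m a b"
  unfolding greenR_def S1_def by (metis image_eqI insertI2 rmult1.simps(2))

lemma greenR_mono: "U \<subseteq> S \<Longrightarrow> greenR U m a b \<Longrightarrow> greenR S m a b"
  unfolding greenR_def using S1_mono by blast

lemma greenL_mono: "U \<subseteq> S \<Longrightarrow> greenL U m a b \<Longrightarrow> greenL S m a b"
  unfolding greenL_def using S1_mono by blast

lemma Lstar_sym: "Lstar U m a b \<Longrightarrow> Lstar U m b a"
  unfolding Lstar_def by simp

lemma Lstar_trans: "Lstar U m a b \<Longrightarrow> Lstar U m b c \<Longrightarrow> Lstar U m a c"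
  unfolding Lstar_def by simp

lemma Lstar_idem_absorb: "Lstar U m a e \<Longrightarrow> e \<in> idems U m \<Longrightarrow> m a e = a"
  using Rstar_idem_absorb[of U "dual m"] by (simp add: Rstar_dual idems_dual)

lemma Lstar_restrict: "U \<subseteq> S \<Longrightarrow> a \<in> U \<Longrightarrow> b \<in> U \<Longrightarrow> Lstar S m a b \<Longrightarrow> Lstar U m a b"
  using Rstar_restrict[of U S a b "dual m"] by (simp add: Rstar_dual)

lemma Lstar_right_compat:
  "semigroup_on U m \<Longrightarrow> c \<in> U \<Longrightarrow> Lstar U m a b \<Longrightarrow> Lstar U m (m a c) (m b c)"
  using Rstar_left_compat[of U "dual m"] by (simp add: Rstar_dual semigroup_on_dual)

lemma greenL_I:
  "a \<in> U \<Longrightarrow> b \<in> U \<Longrightarrow> u \<in> U \<Longrightarrow> v \<in> U \<Longrightarrow> a = m u b \<Longrightarrow> b = m v a \<Longrightarrow> greenL U m a b"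
  unfolding greenL_def S1_def by (metis image_eqI insertI2 lmult1.simps(2))

lemma greenL_imp_Lstar: "semigroup_on U m \<Longrightarrow> greenL U m a b \<Longrightarrow> Lstar U m a b"
  using greenR_imp_Rstar[of U "dual m"] by (simp add: Rstar_dual greenR_dual semigroup_on_dual)

lemma greenL_idems_iff:
  "semigroup_on U m \<Longrightarrow> e \<in> idems U m \<Longrightarrow> f \<in> idems U m \<Longrightarrow>
    greenL U m e f \<longleftrightarrow> m e f = e \<and> m f e = f"
  using greenR_idems_iff[of U "dual m"] by (simp add: greenR_dual idems_dual semigroup_on_dual)

section \<open>Adequate semigroups\<close>

lemma adequate_Rstar_idem_unique:
  assumes ad: "adequate U m" and e: "e \<in> idems U m" and f: "f \<in> idems U m"
    and "Rstar U m a e" "Rstar U m a f"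
  shows "e = f"
proof -
  have ef: "Rstar U m e f" using assms(4,5) Rstar_sym Rstar_trans by metis
  have "m f e = e" using Rstar_idem_absorb[OF ef f] .
  moreover have "m e f = f" using Rstar_idem_absorb[OF Rstar_sym[OF ef] e] .
  ultimately show ?thesis using ad e f unfolding adequate_def by metis
qed

lemma aplus_spec:
  assumes ad: "adequate U m" and a: "a \<in> U"
  shows "aplus U m a \<in> idems U m \<and> Rstar U m a (aplus U m a)"
proof -
  obtain e where "e \<in> idems U m" "Rstar U m a e"
    using ad a unfolding adequate_def abundant_def by blast
  then have "\<exists>!e. e \<in> idems U m \<and> Rstar U m a e"
    using adequate_Rstar_idem_unique[OF ad] by blast
  then show ?thesis unfolding aplus_def by (rule theI')
qed

lemma aplus_eqI:
  "adequate U m \<Longrightarrow> a \<in> U \<Longrightarrow> e \<in> idems U m \<Longrightarrow> Rstar U m a e \<Longrightarrow> aplus U m a = e"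
  using adequate_Rstar_idem_unique aplus_spec by metis

lemma astar_spec:
  "adequate U m \<Longrightarrow> a \<in> U \<Longrightarrow> astar U m a \<in> idems U m \<and> Lstar U m a (astar U m a)"
  using aplus_spec[of U "dual m"] by (simp add: adequate_dual aplus_dual idems_dual Rstar_dual)


lemma aplus_greenR:
  "adequate U m \<Longrightarrow> greenR U m a e \<Longrightarrow> e \<in> idems U m \<Longrightarrow> aplus U m a = e"
proof -
  assume ad: "adequate U m" and ae: "greenR U m a e" and e: "e \<in> idems U m"
  have sg: "semigroup_on U m" and a: "a \<in> U"
    using ad ae unfolding adequate_def abundant_def greenR_def by blast+
  show ?thesis
    using greenR_imp_Rstar[OF sg ae] by (rule aplus_eqI[OF ad a e])
qed

lemma astar_greenL:
  "adequate U m \<Longrightarrow> greenL U m a e \<Longrightarrow> e \<in> idems U m \<Longrightarrow> astar U m a = e"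
  using aplus_greenR[of U "dual m"] by (simp add: adequate_dual aplus_dual greenR_dual idems_dual)

lemma aplus_idem: "adequate U m \<Longrightarrow> e \<in> idems U m \<Longrightarrow> aplus U m e = e"
  by (metis aplus_eqI Rstar_refl idemsD)

section \<open>Transversals\<close>

lemma decomp_mono: "V \<subseteq> S \<Longrightarrow> decomp V S0 m x a e f \<Longrightarrow> decomp S S0 m x a e f"
  unfolding decomp_def using idems_mono greenL_mono greenR_mono by (metis subsetD)

lemma star_subsemigroup_between:
  assumes U: "star_subsemigroup U S m" and UV: "U \<subseteq> V" and VS: "V \<subseteq> S"
  shows "star_subsemigroup U V m"
  unfolding star_subsemigroup_def
proof (intro conjI ballI)
  show "subsemigroup U V m" "abundant U m"
    using U UV unfolding star_subsemigroup_def subsemigroup_def by auto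
next
  fix a b assume ab: "a \<in> U" "b \<in> U"
  then have "a \<in> V" "b \<in> V" using UV by auto
  then show "Lstar U m a b \<longleftrightarrow> Lstar V m a b" "Rstar U m a b \<longleftrightarrow> Rstar V m a b"
    using U ab Lstar_restrict[OF UV ab] Lstar_restrict[OF VS] Rstar_restrict[OF UV ab]
      Rstar_restrict[OF VS] unfolding star_subsemigroup_def by blast+
qed

locale quasi_ideal_transversal =
  fixes S S0 :: "'a set" and m :: "'a \<Rightarrow> 'a \<Rightarrow> 'a" (infixl "\<cdot>" 70)
  assumes S0_quasi_ideal_transversal: "quasi_ideal_adequate_transversal S S0 m"
begin

abbreviation plus0 where "plus0 a \<equiv> aplus S0 m a"
abbreviation star0 where "star0 a \<equiv> astar S0 m a"
abbreviation bar0 where "bar0 x \<equiv> xbar S S0 m x"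
abbreviation ex0 where "ex0 x \<equiv> ex S S0 m x"
abbreviation fx0 where "fx0 x \<equiv> fx S S0 m x"

lemma S0_adequate_transversal: "adequate_transversal S S0 m"
  using S0_quasi_ideal_transversal unfolding quasi_ideal_adequate_transversal_def by blast

lemma semigroup: "semigroup_on S m"
  using S0_adequate_transversal unfolding adequate_transversal_def abundant_def by blast

lemma mult_closed [simp]: "a \<in> S \<Longrightarrow> b \<in> S \<Longrightarrow> a \<cdot> b \<in> S"
  using semigroup_on_closed[OF semigroup] .

lemma assoc: "a \<in> S \<Longrightarrow> b \<in> S \<Longrightarrow> c \<in> S \<Longrightarrow> a \<cdot> b \<cdot> c = a \<cdot> (b \<cdot> c)"
  using semigroup_on_assoc[OF semigroup] .

lemma adequate_S0: "adequate S0 m"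
  using S0_adequate_transversal unfolding adequate_transversal_def by blast

lemma semigroup_S0: "semigroup_on S0 m"
  using adequate_S0 unfolding adequate_def abundant_def by blast

lemma star_subsemigroup_S0: "star_subsemigroup S0 S m"
  using S0_adequate_transversal unfolding adequate_transversal_def by blast

lemma S0_subset: "S0 \<subseteq> S"
  using star_subsemigroup_S0 unfolding star_subsemigroup_def subsemigroup_def by blast

lemma S0_in_S [simp]: "a \<in> S0 \<Longrightarrow> a \<in> S"
  using S0_subset by blast

lemma quasi_ideal: "a \<in> S0 \<Longrightarrow> s \<in> S \<Longrightarrow> b \<in> S0 \<Longrightarrow> a \<cdot> s \<cdot> b \<in> S0"
  using S0_quasi_ideal_transversal unfolding quasi_ideal_adequate_transversal_def by blast

lemma idems_S0_commute: "e \<in> idems S0 m \<Longrightarrow> f \<in> idems S0 m \<Longrightarrow> e \<cdot> f = f \<cdot> e"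
  using adequate_S0 unfolding adequate_def by blast

lemma idems_S0_in_idems_S: "e \<in> idems S0 m \<Longrightarrow> e \<in> idems S m"
  using idems_mono[OF S0_subset] by (rule subsetD)

lemma unique_bar: "x \<in> S \<Longrightarrow> \<exists>!a. a \<in> S0 \<and> (\<exists>e f. decomp S S0 m x a e f)"
  using S0_adequate_transversal unfolding adequate_transversal_def by blast

lemma plus0_idems: "a \<in> S0 \<Longrightarrow> plus0 a \<in> idems S0 m"
  using aplus_spec[OF adequate_S0] by (rule conjunct1)

lemma star0_idems: "a \<in> S0 \<Longrightarrow> star0 a \<in> idems S0 m"
  using astar_spec[OF adequate_S0] by (rule conjunct1)

lemma plus0_in_S0 [simp]: "a \<in> S0 \<Longrightarrow> plus0 a \<in> S0"
  using idemsD[OF plus0_idems] by (rule conjunct1)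

lemma star0_in_S0 [simp]: "a \<in> S0 \<Longrightarrow> star0 a \<in> S0"
  using idemsD[OF star0_idems] by (rule conjunct1)

lemma plus0_plus0 [simp]: "a \<in> S0 \<Longrightarrow> plus0 a \<cdot> plus0 a = plus0 a"
  using idemsD[OF plus0_idems] by (rule conjunct2)

lemma star0_star0 [simp]: "a \<in> S0 \<Longrightarrow> star0 a \<cdot> star0 a = star0 a"
  using idemsD[OF star0_idems] by (rule conjunct2)

lemma Rstar_plus0: "a \<in> S0 \<Longrightarrow> Rstar S m a (plus0 a)"
  using aplus_spec[OF adequate_S0] star_subsemigroup_S0 unfolding star_subsemigroup_def
  by (meson plus0_in_S0)

lemma Lstar_star0: "a \<in> S0 \<Longrightarrow> Lstar S m a (star0 a)"
  using astar_spec[OF adequate_S0] star_subsemigroup_S0 unfolding star_subsemigroup_def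
  by (meson star0_in_S0)

lemma plus0_mult [simp]: "a \<in> S0 \<Longrightarrow> plus0 a \<cdot> a = a"
  using aplus_spec[OF adequate_S0] by (meson Rstar_idem_absorb)

lemma mult_star0 [simp]: "a \<in> S0 \<Longrightarrow> a \<cdot> star0 a = a"
  using astar_spec[OF adequate_S0] by (meson Lstar_idem_absorb)

lemma decomp_iff:
  "decomp S S0 m x a e f \<longleftrightarrow> a \<in> S0 \<and> e \<in> idems S m \<and> f \<in> idems S m \<and> x = e \<cdot> a \<cdot> f \<and>
     e \<cdot> plus0 a = e \<and> plus0 a \<cdot> e = plus0 a \<and> star0 a \<cdot> f = f \<and> f \<cdot> star0 a = star0 a"
proof -
  have L: "greenL S m e (plus0 a) \<longleftrightarrow> e \<cdot> plus0 a = e \<and> plus0 a \<cdot> e = plus0 a"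
    if "a \<in> S0" "e \<in> idems S m"
    using greenL_idems_iff[OF semigroup that(2) idems_S0_in_idems_S[OF plus0_idems[OF that(1)]]] .
  have R: "greenR S m f (star0 a) \<longleftrightarrow> star0 a \<cdot> f = f \<and> f \<cdot> star0 a = star0 a"
    if "a \<in> S0" "f \<in> idems S m"
    using greenR_idems_iff[OF semigroup that(2) idems_S0_in_idems_S[OF star0_idems[OF that(1)]]] .
  show ?thesis
    unfolding decomp_def using L R by blast
qed

lemma decomp_Rstar:
  assumes "decomp S S0 m x a e f"
  shows "Rstar S m x e"
proof -
  have a: "a \<in> S0" and e: "e \<in> S" "e \<cdot> e = e" "e \<cdot> plus0 a = e" and f: "f \<in> S"
    and x: "x = e \<cdot> a \<cdot> f" and fa: "f \<cdot> star0 a = star0 a"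
    using assms unfolding decomp_iff idems_def by auto
  have "x \<cdot> star0 a = e \<cdot> a"
    using a e f fa by (simp add: x assoc)
  then have "greenR S m x (e \<cdot> a)"
    using a e f x by (intro greenR_I[where u = f and v = "star0 a"]) simp_all
  then have "Rstar S m x (e \<cdot> a)"
    by (rule greenR_imp_Rstar[OF semigroup])
  moreover have "Rstar S m (e \<cdot> a) e"
    using Rstar_left_compat[OF semigroup e(1) Rstar_plus0[OF a]] e(3) by simp
  ultimately show ?thesis
    by (rule Rstar_trans)
qed

lemma decomp_Lstar:
  assumes "decomp S S0 m x a e f"
  shows "Lstar S m x f"
proof -
  have a: "a \<in> S0" and f: "f \<in> S" "f \<cdot> f = f" "star0 a \<cdot> f = f" and e: "e \<in> S"
    and x: "x = e \<cdot> a \<cdot> f" and ae: "plus0 a \<cdot> e = plus0 a"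
    using assms unfolding decomp_iff idems_def by auto
  have "plus0 a \<cdot> x = a \<cdot> f"
    using a e f ae by (simp add: x assoc[symmetric])
  then have "greenL S m x (a \<cdot> f)"
    using a e f x by (intro greenL_I[where u = e and v = "plus0 a"]) (simp_all add: assoc)
  then have "Lstar S m x (a \<cdot> f)"
    by (rule greenL_imp_Lstar[OF semigroup])
  moreover have "Lstar S m (a \<cdot> f) f"
    using Lstar_right_compat[OF semigroup f(1) Lstar_star0[OF a]] f(3) by simp
  ultimately show ?thesis
    by (rule Lstar_trans)
qed

lemma decomp_idems_unique:
  assumes d: "decomp S S0 m x a e f" and d': "decomp S S0 m x a e' f'"
  shows "e = e' \<and> f = f'"
proof -
  have a: "a \<in> S0" and e: "e \<in> idems S m" "e \<cdot> plus0 a = e" "plus0 a \<cdot> e' = plus0 a"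
    and f: "f \<in> idems S m" "star0 a \<cdot> f = f" "f' \<cdot> star0 a = star0 a" and "e' \<in> S" "f' \<in> S"
    using d d' unfolding decomp_iff idems_def by auto
  have "Rstar S m e' e"
    using Rstar_trans[OF Rstar_sym[OF decomp_Rstar[OF d']] decomp_Rstar[OF d]] .
  then have ee': "e \<cdot> e' = e'"
    using e(1) by (rule Rstar_idem_absorb)
  have "Lstar S m f' f"
    using Lstar_trans[OF Lstar_sym[OF decomp_Lstar[OF d']] decomp_Lstar[OF d]] .
  then have f'f: "f' \<cdot> f = f'"
    using f(1) by (rule Lstar_idem_absorb)
  have eS: "e \<in> S" and fS: "f \<in> S" using e(1) f(1) by (simp_all add: idems_def)
  have "e = e \<cdot> (plus0 a \<cdot> e')"
    using e(2,3) by simp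
  also have "\<dots> = e'"
    using a eS \<open>e' \<in> S\<close> by (simp add: assoc[symmetric] e(2) ee')
  finally have "e = e'" .
  have "f = (f' \<cdot> star0 a) \<cdot> f"
    using f(2,3) by simp
  also have "\<dots> = f'"
    using a fS \<open>f' \<in> S\<close> by (simp add: assoc f(2) f'f)
  finally show ?thesis
    using \<open>e = e'\<close> by blast
qed

lemma decomp_in_S: "decomp S S0 m x a e f \<Longrightarrow> x \<in> S"
  unfolding decomp_iff idems_def by auto

lemma bar0_eq:
  assumes d: "decomp S S0 m x a e f"
  shows "bar0 x = a"
proof -
  have "a \<in> S0" using d by (simp add: decomp_iff)
  then show ?thesis
    unfolding xbar_def using d by (intro the1_equality[OF unique_bar[OF decomp_in_S[OF d]]]) blast
qed

lemma ex0_eq: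
  assumes d: "decomp S S0 m x a e f"
  shows "ex0 x = e"
  unfolding ex_def bar0_eq[OF d]
proof (rule the_equality)
  show "\<exists>f. decomp S S0 m x a e f" using d by blast
next
  fix e' assume "\<exists>f'. decomp S S0 m x a e' f'"
  then show "e' = e" using decomp_idems_unique[OF d] by (metis (full_types))
qed

lemma fx0_eq:
  assumes d: "decomp S S0 m x a e f"
  shows "fx0 x = f"
  unfolding fx_def bar0_eq[OF d]
proof (rule the_equality)
  show "\<exists>e. decomp S S0 m x a e f" using d by blast
next
  fix f' assume "\<exists>e'. decomp S S0 m x a e' f'"
  then show "f' = f" using decomp_idems_unique[OF d] by (metis (full_types))
qed

lemma decomp_bar0:
  assumes "x \<in> S"
  shows "decomp S S0 m x (bar0 x) (ex0 x) (fx0 x)"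
proof -
  obtain a e f where d: "decomp S S0 m x a e f"
    using unique_bar[OF assms] by blast
  show ?thesis
    unfolding bar0_eq[OF d] ex0_eq[OF d] fx0_eq[OF d] by (rule d)
qed

lemma ex0_greenL_plus0:
  assumes "x \<in> S"
  shows "ex0 x \<in> S" "ex0 x \<cdot> ex0 x = ex0 x"
    "ex0 x \<cdot> plus0 (bar0 x) = ex0 x" "plus0 (bar0 x) \<cdot> ex0 x = plus0 (bar0 x)"
  using decomp_bar0[OF assms] by (simp_all add: decomp_iff idems_def)

lemma decomp_S0:
  assumes a: "a \<in> S0"
  shows "decomp S S0 m a a (plus0 a) (star0 a)"
proof -
  have "plus0 a \<in> idems S m" "star0 a \<in> idems S m"
    using idems_S0_in_idems_S plus0_idems[OF a] star0_idems[OF a] by blast+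
  moreover have "a = plus0 a \<cdot> a \<cdot> star0 a"
    using a by simp
  ultimately show ?thesis
    unfolding decomp_iff using a by simp
qed

lemma bar0_S0 [simp]: "a \<in> S0 \<Longrightarrow> bar0 a = a"
  using bar0_eq[OF decomp_S0] .

lemma fx0_S0 [simp]: "a \<in> S0 \<Longrightarrow> fx0 a = star0 a"
  using fx0_eq[OF decomp_S0] .

lemma bar0_in_S0: "x \<in> S \<Longrightarrow> bar0 x \<in> S0"
  using decomp_bar0 by (simp add: decomp_iff)

section \<open>The subsemigroup \<open>L\<close>\<close>

abbreviation Lset where "Lset \<equiv> {x \<in> S. fx0 x = fx0 (bar0 x)}"

lemma Lset_iff: "x \<in> Lset \<longleftrightarrow> x \<in> S \<and> fx0 x = star0 (bar0 x)"
  using bar0_in_S0 by auto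

lemma S0_subset_Lset: "S0 \<subseteq> Lset"
  by auto

lemma Lset_decomp:
  assumes "x \<in> Lset"
  shows "decomp S S0 m x (bar0 x) (ex0 x) (star0 (bar0 x))"
proof -
  have "x \<in> S" "fx0 x = star0 (bar0 x)" using assms Lset_iff by blast+
  then show ?thesis using decomp_bar0 by metis
qed

lemma Lset_eq_ex0_mult_bar0:
  assumes "x \<in> Lset"
  shows "x = ex0 x \<cdot> bar0 x"
proof -
  have "bar0 x \<in> S0" "ex0 x \<in> S" "x = ex0 x \<cdot> bar0 x \<cdot> star0 (bar0 x)"
    using Lset_decomp[OF assms] by (simp_all add: decomp_iff idems_def)
  then show ?thesis
    by (simp add: assoc)
qed

lemma Lset_mult_star0:
  assumes "x \<in> Lset"
  shows "x \<cdot> star0 (bar0 x) = x"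
proof -
  have "bar0 x \<in> S0" "ex0 x \<in> S"
    using Lset_decomp[OF assms] by (simp_all add: decomp_iff idems_def)
  then have "ex0 x \<cdot> bar0 x \<cdot> star0 (bar0 x) = ex0 x \<cdot> bar0 x"
    by (simp add: assoc)
  then show ?thesis
    using Lset_eq_ex0_mult_bar0[OF assms] by metis
qed

lemma mult_Lset_in_S0:
  assumes a: "a \<in> S0" and y: "y \<in> Lset"
  shows "a \<cdot> y \<in> S0"
proof -
  have "y \<in> S" "bar0 y \<in> S0" using y bar0_in_S0 by auto
  then have "a \<cdot> y \<cdot> star0 (bar0 y) \<in> S0"
    using a quasi_ideal by simp
  then show ?thesis
    using a \<open>y \<in> S\<close> \<open>bar0 y \<in> S0\<close> Lset_mult_star0[OF y] by (simp add: assoc)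
qed

lemma decomp_idem_mult:
  assumes a: "a \<in> S0" and e: "e \<in> S" "e \<cdot> e = e" "e \<cdot> plus0 a = e" "plus0 a \<cdot> e = plus0 a"
    and c: "c \<in> S0" "plus0 a \<cdot> c = c"
  shows "decomp S S0 m (e \<cdot> c) c (e \<cdot> plus0 c) (star0 c)"
proof -
  have "plus0 a \<cdot> plus0 c = plus0 c"
    using Rstar_mult_fix[OF Rstar_plus0[OF c(1)]] a c by simp
  then have "plus0 c \<cdot> plus0 a = plus0 c"
    using idems_S0_commute[OF plus0_idems[OF a] plus0_idems[OF c(1)]] by simp
  then have "plus0 c \<cdot> e = plus0 c"
    using a c e by (metis assoc plus0_in_S0 S0_in_S)
  then have ce: "plus0 c \<cdot> (e \<cdot> z) = plus0 c \<cdot> z" if "z \<in> S" for z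
    using that c e by (simp add: assoc[symmetric])
  have "e \<cdot> plus0 c \<in> idems S m"
    using c e ce by (intro idemsI) (simp_all add: assoc)
  moreover have "e \<cdot> c = e \<cdot> plus0 c \<cdot> c \<cdot> star0 c"
    using c e by (simp add: assoc)
  ultimately show ?thesis
    unfolding decomp_iff using c e ce idems_S0_in_idems_S star0_idems[OF c(1)]
    by (auto simp: assoc)
qed

lemma idem_mult_in_Lset:
  assumes "a \<in> S0" "e \<in> S" "e \<cdot> e = e" "e \<cdot> plus0 a = e" "plus0 a \<cdot> e = plus0 a"
    and "c \<in> S0" "plus0 a \<cdot> c = c"
  shows "e \<cdot> c \<in> Lset \<and> bar0 (e \<cdot> c) = c"
  using bar0_eq[OF decomp_idem_mult[OF assms]] fx0_eq[OF decomp_idem_mult[OF assms]] assms(6)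
    decomp_in_S[OF decomp_idem_mult[OF assms]] by simp

lemma ex0_in_Lset:
  assumes "x \<in> S"
  shows "ex0 x \<in> Lset"
proof -
  have a: "bar0 x \<in> S0" using bar0_in_S0[OF assms] .
  show ?thesis
    using idem_mult_in_Lset[OF a ex0_greenL_plus0[OF assms] plus0_in_S0[OF a] plus0_plus0[OF a]]
      ex0_greenL_plus0(3)[OF assms] by simp
qed

lemma Lset_mult_closed:
  assumes x: "x \<in> Lset" and y: "y \<in> Lset"
  shows "x \<cdot> y \<in> Lset"
proof -
  have xS: "x \<in> S" using x by simp
  have a: "bar0 x \<in> S0" using bar0_in_S0[OF xS] .
  note e = ex0_greenL_plus0[OF xS]
  have c: "bar0 x \<cdot> y \<in> S0" "plus0 (bar0 x) \<cdot> (bar0 x \<cdot> y) = bar0 x \<cdot> y"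
    using mult_Lset_in_S0[OF a y] a y by (simp_all add: assoc[symmetric])
  have "x \<cdot> y = ex0 x \<cdot> (bar0 x \<cdot> y)"
    using a e y by (subst Lset_eq_ex0_mult_bar0[OF x]) (simp add: assoc)
  then show ?thesis
    using idem_mult_in_Lset[OF a e c] by simp
qed

lemma Lset_idem_absorb:
  assumes g: "g \<in> Lset" "g \<cdot> g = g"
  shows "g \<cdot> ex0 g = ex0 g" and "star0 (bar0 g) \<cdot> g = star0 (bar0 g)"
proof -
  have gi: "g \<in> idems S m" using g by (simp add: idems_def)
  note d = Lset_decomp[OF g(1)]
  show "g \<cdot> ex0 g = ex0 g"
    using Rstar_idem_absorb[OF Rstar_sym[OF decomp_Rstar[OF d]] gi] .
  show "star0 (bar0 g) \<cdot> g = star0 (bar0 g)"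
    using Lstar_idem_absorb[OF Lstar_sym[OF decomp_Lstar[OF d]] gi] .
qed

text \<open>For an idempotent \<open>g = e a\<close> of \<open>L\<close>, the element \<open>k = a\<^sup>* e = a\<^sup>* e a\<^sup>+\<close> of \<open>S\<^sup>0\<close>
  satisfies \<open>k\<^sup>+ = a\<^sup>*\<close>, \<open>k\<^sup>* = a\<^sup>+\<close> and \<open>e = g k a\<^sup>+\<close>; so \<open>k = e\<^sup>\<circ> = a\<^sup>+\<close>.\<close>

lemma Lset_idem_star0_mult_ex0:
  assumes g: "g \<in> Lset" "g \<cdot> g = g"
  shows "star0 (bar0 g) \<cdot> ex0 g = plus0 (bar0 g)"
proof -
  define a e where "a = bar0 g" and "e = ex0 g"
  have d: "decomp S S0 m g a e (star0 a)"
    using Lset_decomp[OF g(1)] unfolding a_def e_def .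
  have a: "a \<in> S0" and e: "e \<in> S" "e \<cdot> e = e" "e \<cdot> plus0 a = e" "plus0 a \<cdot> e = plus0 a"
    using d by (simp_all add: decomp_iff idems_def)
  have gS: "g \<in> S" and ge: "g = e \<cdot> a"
    using g Lset_eq_ex0_mult_bar0 unfolding a_def e_def by auto
  have g_e: "g \<cdot> e = e" and sa_g: "star0 a \<cdot> g = star0 a" and g_sa: "g \<cdot> star0 a = g"
    using Lset_idem_absorb[OF g] Lset_mult_star0[OF g(1)] unfolding a_def e_def by auto
  define k where "k = star0 a \<cdot> e"
  have k: "k \<in> S0"
    using quasi_ideal[OF star0_in_S0[OF a] e(1) plus0_in_S0[OF a]] a e by (simp add: k_def assoc)
  have a_e: "a \<cdot> e = plus0 a"
  proof -
    have "plus0 a = plus0 a \<cdot> (g \<cdot> e)" using e(4) g_e by simp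
    also have "\<dots> = (plus0 a \<cdot> e) \<cdot> (a \<cdot> e)" using ge a e(1) by (simp add: assoc)
    also have "\<dots> = a \<cdot> e" using e(4) a e(1) by (simp add: assoc[symmetric])
    finally show ?thesis by simp
  qed
  have ka: "k \<cdot> a = star0 a" using a e(1) ge sa_g by (simp add: k_def assoc)
  have ak: "a \<cdot> k = plus0 a" using a e(1) a_e by (simp add: k_def assoc[symmetric])
  have kpa: "k \<cdot> plus0 a = k" using a e(1,3) by (simp add: k_def assoc)
  have sak: "star0 a \<cdot> k = k" using a e(1) by (simp add: k_def assoc[symmetric])
  have pk: "plus0 k = star0 a"
    using greenR_I[where u = k and v = a, OF k star0_in_S0[OF a] k a sak[symmetric] ka[symmetric]]
    by (rule aplus_greenR[OF adequate_S0 _ star0_idems[OF a]])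
  have sk: "star0 k = plus0 a"
    using greenL_I[where u = k and v = a, OF k plus0_in_S0[OF a] k a kpa[symmetric] ak[symmetric]]
    by (rule astar_greenL[OF adequate_S0 _ plus0_idems[OF a]])
  have "g \<cdot> k = e" using gS a e(1) g_sa g_e by (simp add: k_def assoc[symmetric])
  then have "decomp S S0 m e k g (plus0 a)"
    unfolding decomp_iff using k a e(3) g gS sa_g g_sa idems_S0_in_idems_S plus0_idems[OF a]
    by (auto simp: pk sk idems_def)
  then have "bar0 e = k" by (rule bar0_eq)
  moreover have "bar0 e = plus0 a"
    using idem_mult_in_Lset[OF a e plus0_in_S0[OF a] plus0_plus0[OF a]] e(3) by simp
  ultimately show ?thesis by (simp add: k_def a_def e_def)
qed

lemma Lset_idem_bar0:
  assumes g: "g \<in> Lset" "g \<cdot> g = g"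
  shows "bar0 g \<in> idems S0 m" and "g \<cdot> bar0 g = g" and "bar0 g \<cdot> g = bar0 g"
proof -
  have a: "bar0 g \<in> S0" and e: "ex0 g \<in> S" using Lset_decomp[OF g(1)]
    by (simp_all add: decomp_iff idems_def)
  have "star0 (bar0 g) = star0 (bar0 g) \<cdot> ex0 g \<cdot> bar0 g"
    using Lset_idem_absorb(2)[OF g] Lset_eq_ex0_mult_bar0[OF g(1)] a e by (simp add: assoc)
  then have sa: "star0 (bar0 g) = bar0 g"
    using Lset_idem_star0_mult_ex0[OF g] a by simp
  show "bar0 g \<in> idems S0 m" using star0_idems[OF a] sa by simp
  show "g \<cdot> bar0 g = g" using Lset_mult_star0[OF g(1)] sa by simp
  show "bar0 g \<cdot> g = bar0 g" using Lset_idem_absorb(2)[OF g] sa by simp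
qed

lemma bar0_idem_mult:
  assumes g: "g \<in> Lset" "g \<cdot> g = g" and h: "h \<in> Lset" and gh: "g \<cdot> h = h"
  shows "bar0 h = bar0 g \<cdot> h"
proof -
  define a where "a = bar0 g"
  have ai: "a \<in> idems S0 m" and ga: "g \<cdot> a = g" and ag: "a \<cdot> g = a"
    using Lset_idem_bar0[OF g] unfolding a_def by auto
  have a: "a \<in> S0" "a \<cdot> a = a" and pa: "plus0 a = a"
    using ai aplus_idem[OF adequate_S0 ai] by (auto simp: idems_def)
  have gS: "g \<in> S" and hS: "h \<in> S" using g h by auto
  have "bar0 (g \<cdot> (a \<cdot> h)) = a \<cdot> h"
    using idem_mult_in_Lset[OF a(1) gS g(2) _ _ mult_Lset_in_S0[OF a(1) h]] ga ag a hS pa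
    by (simp add: assoc[symmetric])
  moreover have "g \<cdot> (a \<cdot> h) = h"
    using ga gh a gS hS by (simp add: assoc[symmetric])
  ultimately show ?thesis by (simp add: a_def)
qed

lemma Lset_idems_greenR_eq:
  assumes g: "g \<in> Lset" "g \<cdot> g = g" and h: "h \<in> Lset" "h \<cdot> h = h"
    and gh: "g \<cdot> h = h" and hg: "h \<cdot> g = g"
  shows "g = h"
proof -
  have gS: "g \<in> S" and hS: "h \<in> S" using g h by auto
  have a: "bar0 g \<in> idems S0 m" and b: "bar0 h \<in> idems S0 m"
    using Lset_idem_bar0(1) g h by blast+
  have "bar0 g \<cdot> bar0 h = bar0 h"
    using bar0_idem_mult[OF g h(1) gh] a gS hS by (simp add: idems_def assoc[symmetric])
  moreover have "bar0 h \<cdot> bar0 g = bar0 g"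
    using bar0_idem_mult[OF h g(1) hg] b gS hS by (simp add: idems_def assoc[symmetric])
  ultimately have ab: "bar0 g = bar0 h"
    using idems_S0_commute[OF a b] by simp
  have "g = h \<cdot> bar0 h \<cdot> g"
    using hg Lset_idem_bar0(2)[OF h] by simp
  also have "\<dots> = h \<cdot> (bar0 g \<cdot> g)"
    using ab b gS hS by (simp add: idems_def assoc)
  also have "\<dots> = h"
    using Lset_idem_bar0(2,3)[OF g] Lset_idem_bar0(2)[OF h] ab by simp
  finally show ?thesis .
qed

lemma Lset_subsemigroup: "subsemigroup Lset S m"
  unfolding subsemigroup_def using Lset_mult_closed by blast

lemma Lset_semigroup: "semigroup_on Lset m"
  unfolding semigroup_on_def using Lset_mult_closed assoc by simp

lemma ex0_idems_Lset: "x \<in> S \<Longrightarrow> ex0 x \<in> idems Lset m"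
  using decomp_bar0 ex0_in_Lset by (simp add: decomp_iff idems_def)

lemma star0_bar0_idems_Lset: "x \<in> S \<Longrightarrow> star0 (bar0 x) \<in> idems Lset m"
  using S0_subset_Lset star0_idems[OF bar0_in_S0] by (auto simp: idems_def)

lemma Lset_Rstar_ex0: "x \<in> Lset \<Longrightarrow> Rstar Lset m x (ex0 x)"
  using Rstar_restrict[of Lset S] decomp_Rstar[OF decomp_bar0] ex0_in_Lset by blast

lemma Lset_Lstar_star0: "x \<in> Lset \<Longrightarrow> Lstar Lset m x (star0 (bar0 x))"
  using Lstar_restrict[of Lset S] decomp_Lstar[OF Lset_decomp] S0_subset_Lset bar0_in_S0
    star0_in_S0 by blast

lemma Lset_abundant: "abundant Lset m"
  unfolding abundant_def
proof (intro conjI Lset_semigroup ballI)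
  fix x assume x: "x \<in> Lset"
  then show "\<exists>e\<in>idems Lset m. Rstar Lset m x e"
    using ex0_idems_Lset Lset_Rstar_ex0 by blast
  from x show "\<exists>e\<in>idems Lset m. Lstar Lset m x e"
    using star0_bar0_idems_Lset Lset_Lstar_star0 by blast
qed

lemma Lset_left_adequate: "left_adequate Lset m"
  unfolding left_adequate_def
proof (intro conjI Lset_abundant ballI)
  fix x assume x: "x \<in> Lset"
  show "\<exists>!e. e \<in> idems Lset m \<and> Rstar Lset m x e"
  proof (rule ex1I[of _ "ex0 x"])
    show "ex0 x \<in> idems Lset m \<and> Rstar Lset m x (ex0 x)"
      using x ex0_idems_Lset Lset_Rstar_ex0 by blast
  next
    fix y assume y: "y \<in> idems Lset m \<and> Rstar Lset m x y"
    have e: "ex0 x \<in> idems Lset m" using x ex0_idems_Lset by simp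
    have R: "Rstar Lset m (ex0 x) y"
      using Rstar_trans[OF Rstar_sym[OF Lset_Rstar_ex0[OF x]]] y by blast
    have "y \<in> Lset" "y \<cdot> y = y" "ex0 x \<in> Lset" "ex0 x \<cdot> ex0 x = ex0 x"
      using y e by (simp_all add: idems_def)
    then show "y = ex0 x"
      using Lset_idems_greenR_eq Rstar_idem_absorb[OF R] Rstar_idem_absorb[OF Rstar_sym[OF R] e] y
      by blast
  qed
qed

lemma decomp_within_Lset:
  assumes x: "x \<in> Lset"
  shows "decomp Lset S0 m x (bar0 x) (ex0 x) (star0 (bar0 x))"
proof -
  have xS: "x \<in> S" using x by simp
  have a: "bar0 x \<in> S0" using bar0_in_S0[OF xS] .
  have pa: "plus0 (bar0 x) \<in> idems Lset m" and sa: "star0 (bar0 x) \<in> idems Lset m"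
    using S0_subset_Lset plus0_idems[OF a] star0_idems[OF a] by (auto simp: idems_def)
  note e = ex0_idems_Lset[OF xS] and d = Lset_decomp[OF x]
  have "greenL Lset m (ex0 x) (plus0 (bar0 x))"
    using d unfolding greenL_idems_iff[OF Lset_semigroup e pa] decomp_iff by blast
  moreover have "greenR Lset m (star0 (bar0 x)) (star0 (bar0 x))"
    using a unfolding greenR_idems_iff[OF Lset_semigroup sa sa] by simp
  ultimately show ?thesis
    using a e sa d unfolding decomp_def by blast
qed

lemma Lset_adequate_transversal: "adequate_transversal Lset S0 m"
  unfolding adequate_transversal_def
proof (intro conjI Lset_abundant adequate_S0 ballI)
  show "star_subsemigroup S0 Lset m"
    using star_subsemigroup_between[OF star_subsemigroup_S0 S0_subset_Lset] by blast
next
  fix x assume x: "x \<in> Lset"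
  show "\<exists>!a. a \<in> S0 \<and> (\<exists>e f. decomp Lset S0 m x a e f)"
  proof (rule ex1I[of _ "bar0 x"])
    show "bar0 x \<in> S0 \<and> (\<exists>e f. decomp Lset S0 m x (bar0 x) e f)"
      using decomp_within_Lset[OF x] bar0_in_S0 x by blast
  next
    fix a assume "a \<in> S0 \<and> (\<exists>e f. decomp Lset S0 m x a e f)"
    then obtain e f where "decomp Lset S0 m x a e f" by blast
    then show "a = bar0 x"
      using bar0_eq decomp_mono[of Lset S] by blast
  qed
qed

lemma Lset_quasi_ideal_adequate_transversal: "quasi_ideal_adequate_transversal Lset S0 m"
  unfolding quasi_ideal_adequate_transversal_def
  using Lset_adequate_transversal quasi_ideal by blast

end

theorem theorem2p3:
  fixes S S0 :: "'a set" and m :: "'a \<Rightarrow> 'a \<Rightarrow> 'a"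
  assumes "abundant S m"
    and "quasi_ideal_adequate_transversal S S0 m"
  defines "R \<equiv> {x\<in>S. ex S S0 m x = ex S S0 m (xbar S S0 m x)}"
    and "L \<equiv> {x\<in>S. fx S S0 m x = fx S S0 m (xbar S S0 m x)}"
  shows "subsemigroup L S m \<and> subsemigroup R S m
    \<and> left_adequate L m \<and> right_adequate R m
    \<and> quasi_ideal_adequate_transversal L S0 m
    \<and> quasi_ideal_adequate_transversal R S0 m"
proof -
  interpret L: quasi_ideal_transversal S S0 m
    using assms(2) by unfold_locales
  interpret R: quasi_ideal_transversal S S0 "dual m"
    using quasi_ideal_adequate_transversal_dual[OF assms(2)] by unfold_locales
  have "R.Lset = R"
    unfolding R_def fx_dual[OF L.semigroup L.S0_subset] xbar_dual[OF L.semigroup L.S0_subset] ..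
  then have "subsemigroup R S m" "right_adequate R m" "quasi_ideal_adequate_transversal R S0 m"
    using R.Lset_subsemigroup R.Lset_left_adequate R.Lset_quasi_ideal_adequate_transversal
      quasi_ideal_adequate_transversal_dual[of R S0 "dual m"]
    by (simp_all add: subsemigroup_dual left_adequate_dual)
  then show ?thesis
    using L.Lset_subsemigroup L.Lset_left_adequate L.Lset_quasi_ideal_adequate_transversal
    unfolding L_def by blast
qed

end
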